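(* Let $\lambda>0$ and $\Delta\ge1$, and define $y_1=1$ and $y_k=(1+\lambda\Delta y_{k-1})^{-1}$ for $k\geq 2$. Then $\lim_{k\to \infty} y_k= \frac{2}{1+\sqrt{1+4\lambda\Delta}}$. Moreover, defining $\underline{h}(\epsilon,\Delta) = \sup\{h:\ |y_{h}-y_{h-1}|\geq \epsilon\}$, we have $$\lim_{\Delta\to \infty}\frac{1}{\sqrt{\Delta}}\lim_{\epsilon\to 0}\frac{\underline{h}(\epsilon,\Delta)}{\log(1/\epsilon)} = \sqrt{\lambda}.$$ *)

theory Defs
  imports Complex_Main
begin

text \<open>The sequence y_k (paper indexing, k \<ge> 1): y_1 = 1, y_k = 1/(1 + lam*D*y_(k-1)) for k \<ge> 2.
  The value at index 0 is an unused dummy (set to 1).\<close>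
primrec yseq :: "real \<Rightarrow> real \<Rightarrow> nat \<Rightarrow> real" where
  "yseq lam D 0 = 1"
| "yseq lam D (Suc k) = (if k = 0 then 1 else inverse (1 + lam * D * yseq lam D k))"

text \<open>h_low(eps, D) = sup { h : |y_h - y_(h-1)| \<ge> eps }, with h ranging over indices h \<ge> 2
  (where both y_h and y_(h-1) are defined).\<close>
definition hlow :: "real \<Rightarrow> real \<Rightarrow> real \<Rightarrow> nat" where
  "hlow lam D eps = Sup {h::nat. h \<ge> 2 \<and> \<bar>yseq lam D h - yseq lam D (h - 1)\<bar> \<ge> eps}"

end

(*
  With a = lam * D the recursion is a continued fraction: y_k = P_k / P_(k+1) for the
  generalised Fibonacci numbers P_0 = 0, P_1 = 1, P_(n+2) = P_(n+1) + a P_n, which grow like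
  r^n with r = (1 + sqrt (1 + 4a)) / 2 the dominant root of x^2 = x + a; hence y_k -> 1/r.
  Cassini's identity gives y_(k+1) - y_k = +-a^k / (P_(k+1) P_(k+2)), so the differences decay
  geometrically with ratio q = a / r^2 up to bounded factors, and the last index at which they
  exceed eps is ln (1/eps) / ln (1/q) + O(1). Finally sqrt a * ln (r^2 / a) -> 1 as a -> oo.
*)

theory Submission
  imports Defs "HOL-Real_Asymp.Real_Asymp"
begin

fun gfib :: "real \<Rightarrow> nat \<Rightarrow> real" where
  "gfib a 0 = 0"
| "gfib a (Suc 0) = 1"
| "gfib a (Suc (Suc n)) = gfib a (Suc n) + a * gfib a n"

lemma gfib_nonneg_and_Suc_ge_1:
  assumes "a \<ge> 0"
  shows "0 \<le> gfib a n \<and> 1 \<le> gfib a (Suc n)"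
proof (induction n)
  case 0
  then show ?case by simp
next
  case (Suc n)
  then have "0 \<le> a * gfib a n" using assms by simp
  with Suc show ?case by simp
qed

lemma gfib_nonneg: "a \<ge> 0 \<Longrightarrow> 0 \<le> gfib a n"
  using gfib_nonneg_and_Suc_ge_1 by blast

lemma gfib_Suc_ge_1: "a \<ge> 0 \<Longrightarrow> 1 \<le> gfib a (Suc n)"
  using gfib_nonneg_and_Suc_ge_1 by blast

lemma gfib_cassini: "gfib a (Suc n)^2 - gfib a n * gfib a (Suc (Suc n)) = (-a)^n"
proof (induction n)
  case 0
  then show ?case by simp
next
  case (Suc n)
  have "gfib a (Suc (Suc n))^2 - gfib a (Suc n) * gfib a (Suc (Suc (Suc n)))
      = -a * (gfib a (Suc n)^2 - gfib a n * gfib a (Suc (Suc n)))"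
    by (simp add: algebra_simps power2_eq_square)
  with Suc show ?case by simp
qed

lemma yseq_eq_gfib_ratio:
  assumes "lam * D \<ge> 0"
  shows "yseq lam D (Suc n) = gfib (lam * D) (Suc n) / gfib (lam * D) (Suc (Suc n))"
proof (induction n)
  case 0
  then show ?case by simp
next
  case (Suc n)
  define P1 P2 where "P1 = gfib (lam * D) (Suc n)" and "P2 = gfib (lam * D) (Suc (Suc n))"
  have "P1 \<ge> 1" "P2 \<ge> 1" unfolding P1_def P2_def using gfib_Suc_ge_1[OF assms] by blast+
  have "yseq lam D (Suc (Suc n)) = inverse (1 + lam * D * (P1 / P2))"
    using Suc by (simp add: P1_def P2_def)
  also have "\<dots> = P2 / (P2 + lam * D * P1)"
    using \<open>P1 \<ge> 1\<close> \<open>P2 \<ge> 1\<close> assms by (simp add: field_simps)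
  finally show ?case by (simp add: P1_def P2_def)
qed

lemma yseq_diff_eq:
  assumes "lam * D \<ge> 0"
  shows "yseq lam D (Suc (Suc k)) - yseq lam D (Suc k)
    = (- (lam * D))^(Suc k) / (gfib (lam * D) (Suc (Suc k)) * gfib (lam * D) (Suc (Suc (Suc k))))"
proof -
  define P1 P2 P3 where "P1 = gfib (lam * D) (Suc k)" and "P2 = gfib (lam * D) (Suc (Suc k))"
    and "P3 = gfib (lam * D) (Suc (Suc (Suc k)))"
  have "P2 \<ge> 1" "P3 \<ge> 1" unfolding P2_def P3_def using gfib_Suc_ge_1[OF assms] by blast+
  have "yseq lam D (Suc (Suc k)) - yseq lam D (Suc k) = P2 / P3 - P1 / P2"
    by (simp only: yseq_eq_gfib_ratio[OF assms] P1_def P2_def P3_def)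
  also have "\<dots> = (P2^2 - P1 * P3) / (P2 * P3)"
    using \<open>P2 \<ge> 1\<close> \<open>P3 \<ge> 1\<close> by (simp add: field_simps power2_eq_square)
  also have "P2^2 - P1 * P3 = (- (lam * D))^(Suc k)"
    unfolding P1_def P2_def P3_def by (rule gfib_cassini)
  finally show ?thesis by (simp add: P2_def P3_def)
qed

definition gfib_root :: "real \<Rightarrow> real" where
  "gfib_root a = (1 + sqrt (1 + 4 * a)) / 2"

lemma gfib_root_ge_1: "a \<ge> 0 \<Longrightarrow> gfib_root a \<ge> 1"
  by (simp add: gfib_root_def)

lemma gfib_root_sq:
  assumes "1 + 4 * a \<ge> 0"
  shows "gfib_root a * gfib_root a = gfib_root a + a"
  using assms by (simp add: gfib_root_def field_simps)

lemma gfib_root_conj_sq: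
  assumes "1 + 4 * a \<ge> 0"
  shows "(1 - gfib_root a) * (1 - gfib_root a) = (1 - gfib_root a) + a"
  using gfib_root_sq[OF assms] by (simp add: algebra_simps)

lemma gfib_Suc_le_root_power:
  assumes "a \<ge> 0"
  shows "gfib a (Suc n) \<le> gfib_root a ^ n"
proof -
  let ?r = "gfib_root a"
  have "gfib a (Suc n) \<le> ?r ^ n \<and> gfib a (Suc (Suc n)) \<le> ?r ^ Suc n"
  proof (induction n)
    case 0
    then show ?case using gfib_root_ge_1[OF assms] by simp
  next
    case (Suc n)
    then have "gfib a (Suc (Suc (Suc n))) \<le> ?r ^ Suc n + a * ?r ^ n"
      using assms by (simp add: mult_left_mono add_mono)
    also have "\<dots> = ?r ^ n * (?r * ?r)"
      using gfib_root_sq assms by (simp add: algebra_simps)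
    finally show ?case using Suc by (simp add: algebra_simps)
  qed
  then show ?thesis ..
qed

lemma root_power_le_gfib_Suc:
  assumes "a \<ge> 0"
  shows "gfib_root a ^ n \<le> gfib_root a * gfib a (Suc n)"
proof -
  let ?r = "gfib_root a"
  have "?r ^ n \<le> ?r * gfib a (Suc n) \<and> ?r ^ Suc n \<le> ?r * gfib a (Suc (Suc n))"
  proof (induction n)
    case 0
    then show ?case using gfib_root_ge_1[OF assms] by simp
  next
    case (Suc n)
    have "?r * ?r = ?r + a" using gfib_root_sq assms by simp
    then have "?r ^ Suc (Suc n) = ?r ^ Suc n + a * ?r ^ n"
      by (metis distrib_left mult.assoc mult.commute power_Suc)
    also have "\<dots> \<le> ?r * gfib a (Suc (Suc n)) + a * (?r * gfib a (Suc n))"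
      using Suc assms by (simp add: mult_left_mono add_mono)
    also have "\<dots> = ?r * gfib a (Suc (Suc (Suc n)))"
      by (simp add: algebra_simps)
    finally show ?case using Suc by blast
  qed
  then show ?thesis ..
qed

lemma gfib_binet:
  assumes "1 + 4 * a > 0"
  shows "gfib a n = (gfib_root a ^ n - (1 - gfib_root a) ^ n) / sqrt (1 + 4 * a)"
proof -
  define r s where "r = gfib_root a" and "s = sqrt (1 + 4 * a)"
  have "s > 0" using assms by (simp add: s_def)
  have s_eq: "s = r - (1 - r)" by (simp add: r_def s_def gfib_root_def)
  have r_sq: "r * r = r + a" and r'_sq: "(1 - r) * (1 - r) = (1 - r) + a"
    using gfib_root_sq gfib_root_conj_sq assms by (simp_all add: r_def)
  have "s * gfib a n = r ^ n - (1 - r) ^ n \<and> s * gfib a (Suc n) = r ^ Suc n - (1 - r) ^ Suc n"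
  proof (induction n)
    case 0
    then show ?case using s_eq by simp
  next
    case (Suc n)
    have "s * gfib a (Suc (Suc n)) = s * gfib a (Suc n) + a * (s * gfib a n)"
      by (simp add: algebra_simps)
    also have "\<dots> = (r ^ Suc n - (1 - r) ^ Suc n) + a * (r ^ n - (1 - r) ^ n)"
      using Suc.IH by simp
    also have "\<dots> = r ^ n * (r + a) - (1 - r) ^ n * ((1 - r) + a)"
      by (simp add: algebra_simps)
    also have "\<dots> = r ^ n * (r * r) - (1 - r) ^ n * ((1 - r) * (1 - r))"
      unfolding r_sq r'_sq ..
    also have "\<dots> = r ^ Suc (Suc n) - (1 - r) ^ Suc (Suc n)"
      by (simp add: algebra_simps)
    finally show ?case using Suc by blast
  qed
  then show ?thesis using \<open>s > 0\<close> by (simp add: r_def s_def field_simps)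
qed

lemma gfib_over_root_power_tendsto:
  assumes "a > 0"
  shows "(\<lambda>n. gfib a n / gfib_root a ^ n) \<longlonglongrightarrow> 1 / sqrt (1 + 4 * a)"
proof -
  define r s where "r = gfib_root a" and "s = sqrt (1 + 4 * a)"
  have "s > 1" using assms by (simp add: s_def)
  then have "r > 1" "\<bar>1 - r\<bar> < r" by (simp_all add: r_def s_def gfib_root_def)
  have "gfib a n / r ^ n = (1 - ((1 - r) / r) ^ n) / s" for n
  proof -
    have "r ^ n \<noteq> 0" "s \<noteq> 0" using \<open>r > 1\<close> \<open>s > 1\<close> by auto
    then have "((r ^ n - x) / s) / r ^ n = (1 - x / r ^ n) / s" for x
      by (simp add: field_simps)
    then have "((r ^ n - (1 - r) ^ n) / s) / r ^ n = (1 - ((1 - r) / r) ^ n) / s"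
      by (simp add: power_divide)
    then show ?thesis using gfib_binet[of a n] assms by (simp add: r_def s_def)
  qed
  moreover have "(\<lambda>n. (1 - ((1 - r) / r) ^ n) / s) \<longlonglongrightarrow> (1 - 0) / s"
    using \<open>r > 1\<close> \<open>\<bar>1 - r\<bar> < r\<close> \<open>s > 1\<close>
    by (intro tendsto_intros LIMSEQ_power_zero) (auto simp: abs_divide)
  ultimately show ?thesis by (simp add: r_def s_def)
qed

lemma yseq_tendsto:
  assumes "lam * D > 0"
  shows "yseq lam D \<longlonglongrightarrow> 2 / (1 + sqrt (1 + 4 * lam * D))"
proof -
  define a r c where "a = lam * D" and "r = gfib_root (lam * D)" and "c = 1 / sqrt (1 + 4 * a)"
  define u where "u n = gfib a n / r ^ n" for n
  have "r > 0" using gfib_root_ge_1[of a] assms by (simp add: a_def r_def)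
  have "c \<noteq> 0" using assms by (simp add: a_def c_def)
  have "yseq lam D (Suc n) = u (Suc n) / u (Suc (Suc n)) / r" for n
  proof -
    have "r ^ Suc n \<noteq> 0" using \<open>r > 0\<close> by simp
    then have "u (Suc n) / u (Suc (Suc n)) / r = gfib a (Suc n) / gfib a (Suc (Suc n))"
      by (simp add: u_def)
    then show ?thesis using yseq_eq_gfib_ratio[of lam D n] assms by (simp add: a_def)
  qed
  moreover have "u \<longlonglongrightarrow> c"
    unfolding u_def[abs_def] c_def r_def a_def using assms by (rule gfib_over_root_power_tendsto)
  then have "(\<lambda>n. u (Suc n) / u (Suc (Suc n)) / r) \<longlonglongrightarrow> c / c / r"
    using \<open>c \<noteq> 0\<close> \<open>r > 0\<close>
    by (intro tendsto_divide LIMSEQ_Suc[of u] LIMSEQ_Suc[of "\<lambda>n. u (Suc n)"] tendsto_const) auto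
  ultimately have "(\<lambda>n. yseq lam D (Suc n)) \<longlonglongrightarrow> 1 / r"
    using \<open>c \<noteq> 0\<close> by simp
  then have "yseq lam D \<longlonglongrightarrow> 1 / r"
    by (rule LIMSEQ_imp_Suc)
  then show ?thesis by (simp add: r_def gfib_root_def mult.assoc)
qed

lemma gfib_consecutive_product_bounds:
  assumes a: "a \<ge> 0"
  defines "r \<equiv> gfib_root a"
  shows "gfib a (Suc n) * gfib a (Suc (Suc n)) \<le> r ^ (2 * n + 1)"
    and "r ^ (2 * n + 1) \<le> r ^ 2 * (gfib a (Suc n) * gfib a (Suc (Suc n)))"
proof -
  have "r \<ge> 1" using gfib_root_ge_1[OF a] by (simp add: r_def)
  then have "0 \<le> r ^ n" "0 \<le> r ^ Suc n" "0 \<le> r * gfib a (Suc n)"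
    using gfib_nonneg[OF a] by simp_all
  have "2 * n + 1 = n + Suc n" by simp
  then have split: "r ^ (2 * n + 1) = r ^ n * r ^ Suc n"
    by (metis power_add)
  have upper: "gfib a (Suc m) \<le> r ^ m" and lower: "r ^ m \<le> r * gfib a (Suc m)" for m
    using gfib_Suc_le_root_power[OF a] root_power_le_gfib_Suc[OF a] by (simp_all add: r_def)
  show "gfib a (Suc n) * gfib a (Suc (Suc n)) \<le> r ^ (2 * n + 1)"
    unfolding split using \<open>0 \<le> r ^ n\<close> gfib_nonneg[OF a] by (rule mult_mono[OF upper upper])
  have "r ^ n * r ^ Suc n \<le> (r * gfib a (Suc n)) * (r * gfib a (Suc (Suc n)))"
    using \<open>0 \<le> r * gfib a (Suc n)\<close> \<open>0 \<le> r ^ Suc n\<close> by (rule mult_mono[OF lower lower])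
  then show "r ^ (2 * n + 1) \<le> r ^ 2 * (gfib a (Suc n) * gfib a (Suc (Suc n)))"
    unfolding split by (simp add: algebra_simps power2_eq_square)
qed

lemma yseq_diff_geometric_bounds:
  assumes "lam * D > 0" and "h \<ge> 2"
  defines "r \<equiv> gfib_root (lam * D)"
  defines "q \<equiv> lam * D / r ^ 2"
  shows "q ^ (h - 1) / r \<le> \<bar>yseq lam D h - yseq lam D (h - 1)\<bar>"
    and "\<bar>yseq lam D h - yseq lam D (h - 1)\<bar> \<le> r * q ^ (h - 1)"
proof -
  define a where "a = lam * D"
  obtain k where h: "h = Suc (Suc k)" using \<open>h \<ge> 2\<close> by (metis add_2_eq_Suc le_Suc_ex)
  define P where "P = gfib a (Suc (Suc k)) * gfib a (Suc (Suc (Suc k)))"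
  have "a > 0" "r > 0" using assms gfib_root_ge_1[of a] by (auto simp: a_def r_def)
  have "P > 0" using gfib_Suc_ge_1[of a] \<open>a > 0\<close> unfolding P_def
    by (smt (verit) mult_pos_pos)
  have "yseq lam D h - yseq lam D (h - 1) = (- a) ^ Suc k / P"
    unfolding h diff_Suc_1 P_def a_def using assms(1) by (intro yseq_diff_eq) simp
  then have diff: "\<bar>yseq lam D h - yseq lam D (h - 1)\<bar> = a ^ Suc k / P"
    by (simp only: abs_divide power_abs abs_minus abs_of_pos[OF \<open>a > 0\<close>] abs_of_pos[OF \<open>P > 0\<close>])
  define R where "R = r ^ (2 * Suc k)"
  have P_upper: "P \<le> R * r" and P_lower: "R * r \<le> r ^ 2 * P"
    using gfib_consecutive_product_bounds[of a "Suc k"] \<open>a > 0\<close>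
    by (simp_all only: P_def R_def r_def a_def less_imp_le power_add power_one_right)
  have q_pow: "q ^ (h - 1) = a ^ Suc k / R"
    unfolding h q_def a_def R_def power_divide power_mult[symmetric] by simp
  have "R > 0" using \<open>r > 0\<close> by (simp add: R_def)
  show "q ^ (h - 1) / r \<le> \<bar>yseq lam D h - yseq lam D (h - 1)\<bar>"
    unfolding q_pow diff divide_divide_eq_left using P_upper \<open>P > 0\<close> \<open>a > 0\<close>
    by (intro divide_left_mono) auto
  have "R / r \<le> P"
    using P_lower \<open>r > 0\<close> by (simp add: divide_le_eq power2_eq_square algebra_simps)
  then have "a ^ Suc k / P \<le> a ^ Suc k / (R / r)"
    using \<open>a > 0\<close> \<open>r > 0\<close> \<open>R > 0\<close> \<open>P > 0\<close> by (intro divide_left_mono) auto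
  then show "\<bar>yseq lam D h - yseq lam D (h - 1)\<bar> \<le> r * q ^ (h - 1)"
    unfolding q_pow diff using \<open>r > 0\<close> by (simp add: ac_simps)
qed

lemma Sup_geometric_level_set_bounds:
  fixes d :: "nat \<Rightarrow> real"
  assumes "0 < q" "q < 1" "0 < m" "0 < M"
    and lower: "\<And>h. h \<ge> n\<^sub>0 \<Longrightarrow> m * q ^ h \<le> \<bar>d h\<bar>"
    and upper: "\<And>h. h \<ge> n\<^sub>0 \<Longrightarrow> \<bar>d h\<bar> \<le> M * q ^ h"
    and "0 < e" "e \<le> m * q ^ n\<^sub>0"
  defines "h \<equiv> Sup {h. h \<ge> n\<^sub>0 \<and> \<bar>d h\<bar> \<ge> e}"
  shows "ln (1 / e) + ln m < (real h + 1) * - ln q"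
    and "real h * - ln q \<le> ln (1 / e) + ln M"
proof -
  define S where "S = {h. h \<ge> n\<^sub>0 \<and> \<bar>d h\<bar> \<ge> e}"
  have "(\<lambda>n. M * q ^ n) \<longlonglongrightarrow> M * 0"
    using \<open>0 < q\<close> \<open>q < 1\<close> by (intro tendsto_intros LIMSEQ_power_zero) simp
  then have "eventually (\<lambda>n. M * q ^ n < e) sequentially"
    using \<open>0 < e\<close> by (intro order_tendstoD(2)) auto
  then obtain N where N: "M * q ^ N < e"
    by (auto simp: eventually_sequentially)
  (* Finiteness of the level set is what makes its Sup an actual maximum rather than a junk value. *)
  have "S \<subseteq> {..<N}"
  proof
    fix k assume "k \<in> S"
    then have "e \<le> M * q ^ k" using upper by (force simp: S_def)
    with N have "M * q ^ N < M * q ^ k" by linarith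
    then have "q ^ N < q ^ k" using \<open>0 < M\<close> by simp
    then show "k \<in> {..<N}" using \<open>0 < q\<close> \<open>q < 1\<close> by (simp add: power_strict_decreasing_iff)
  qed
  then have "finite S" by (rule finite_subset) simp
  moreover have "n\<^sub>0 \<in> S" using lower[of n\<^sub>0] \<open>e \<le> m * q ^ n\<^sub>0\<close> by (simp add: S_def)
  ultimately have "h = Max S" "S \<noteq> {}"
    unfolding h_def S_def[symmetric] by (auto intro: cSup_eq_Max)
  with \<open>finite S\<close> have "h \<in> S" and "Suc h \<notin> S"
    by (simp_all add: Max_in) (metis Max_ge Suc_n_not_le_n)
  then have up: "e \<le> M * q ^ h" and low: "m * q ^ Suc h < e"
    using upper[of h] lower[of "Suc h"] by (force simp: S_def)+
  have "ln e \<le> ln (M * q ^ h)"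
    using up \<open>0 < e\<close> by simp
  also have "\<dots> = ln M + real h * ln q"
    using \<open>0 < M\<close> \<open>0 < q\<close> by (simp add: ln_mult ln_realpow)
  finally show "real h * - ln q \<le> ln (1 / e) + ln M"
    using \<open>0 < e\<close> by (simp add: ln_div)
  have "ln m + real (Suc h) * ln q = ln (m * q ^ Suc h)"
    using \<open>0 < m\<close> \<open>0 < q\<close> by (simp add: ln_mult ln_realpow algebra_simps)
  also have "\<dots> < ln e"
    using low \<open>0 < m\<close> \<open>0 < q\<close> \<open>0 < e\<close> by (intro ln_less_cancel_iff[THEN iffD2]) auto
  finally show "ln (1 / e) + ln m < (real h + 1) * - ln q"
    using \<open>0 < e\<close> by (simp add: ln_div algebra_simps)
qed

lemma Sup_geometric_level_set_tendsto:
  fixes d :: "nat \<Rightarrow> real"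
  assumes "0 < q" "q < 1" "0 < m" "0 < M"
    and lower: "\<And>h. h \<ge> n\<^sub>0 \<Longrightarrow> m * q ^ h \<le> \<bar>d h\<bar>"
    and upper: "\<And>h. h \<ge> n\<^sub>0 \<Longrightarrow> \<bar>d h\<bar> \<le> M * q ^ h"
  shows "((\<lambda>e. real (Sup {h. h \<ge> n\<^sub>0 \<and> \<bar>d h\<bar> \<ge> e}) / ln (1 / e)) \<longlongrightarrow> 1 / - ln q) (at_right 0)"
proof -
  define K where "K = - ln q"
  have "K > 0" using assms(1,2) by (simp add: K_def)
  have "eventually (\<lambda>e. e \<in> {0<..<min 1 (m * q ^ n\<^sub>0)}) (at_right 0)"
    using assms(1,3) by (intro eventually_at_right_real) simp
  then have bounds: "eventually (\<lambda>e.
      ((ln (1 / e) + ln m) / K - 1) / ln (1 / e) \<le> real (Sup {h. h \<ge> n\<^sub>0 \<and> \<bar>d h\<bar> \<ge> e}) / ln (1 / e) \<and>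
      real (Sup {h. h \<ge> n\<^sub>0 \<and> \<bar>d h\<bar> \<ge> e}) / ln (1 / e) \<le> ((ln (1 / e) + ln M) / K) / ln (1 / e))
    (at_right 0)"
  proof (rule eventually_mono)
    fix e :: real
    assume e: "e \<in> {0<..<min 1 (m * q ^ n\<^sub>0)}"
    define h where "h = Sup {h. h \<ge> n\<^sub>0 \<and> \<bar>d h\<bar> \<ge> e}"
    have "0 < e" "e \<le> m * q ^ n\<^sub>0" "ln (1 / e) \<ge> 0" using e by auto
    have "(ln (1 / e) + ln m) / K - 1 \<le> real h" and "real h \<le> (ln (1 / e) + ln M) / K"
      using Sup_geometric_level_set_bounds[OF assms \<open>0 < e\<close> \<open>e \<le> m * q ^ n\<^sub>0\<close>] \<open>K > 0\<close>
      by (auto simp: h_def K_def field_simps)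
    then show "((ln (1 / e) + ln m) / K - 1) / ln (1 / e) \<le> real h / ln (1 / e) \<and>
        real h / ln (1 / e) \<le> ((ln (1 / e) + ln M) / K) / ln (1 / e)"
      using \<open>ln (1 / e) \<ge> 0\<close> by (intro conjI divide_right_mono)
  qed
  have lim_lower: "((\<lambda>e. ((ln (1 / e) + ln m) / K - 1) / ln (1 / e)) \<longlongrightarrow> inverse K) (at_right 0)"
    using \<open>K > 0\<close> by real_asymp
  have lim_upper: "((\<lambda>e. ((ln (1 / e) + ln M) / K) / ln (1 / e)) \<longlongrightarrow> inverse K) (at_right 0)"
    using \<open>K > 0\<close> by real_asymp
  have "((\<lambda>e. real (Sup {h. h \<ge> n\<^sub>0 \<and> \<bar>d h\<bar> \<ge> e}) / ln (1 / e)) \<longlongrightarrow> inverse K) (at_right 0)"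
    by (rule tendsto_sandwich[OF _ _ lim_lower lim_upper]) (use bounds in \<open>auto elim: eventually_mono\<close>)
  then show ?thesis by (simp add: K_def inverse_eq_divide)
qed

lemma sqrt_mult_ln_gfib_root_sq_div_tendsto:
  "((\<lambda>x. sqrt x * ln (gfib_root x ^ 2 / x)) \<longlongrightarrow> 1) at_top"
  unfolding gfib_root_def by real_asymp

lemma hlow_tendsto:
  assumes "lam * D > 0"
  shows "((\<lambda>e. real (hlow lam D e) / ln (1 / e))
           \<longlongrightarrow> 1 / ln (gfib_root (lam * D) ^ 2 / (lam * D))) (at_right 0)"
proof -
  define r q where "r = gfib_root (lam * D)" and "q = lam * D / r ^ 2"
  have "r \<ge> 1" and "r * r = r + lam * D"
    using gfib_root_ge_1 gfib_root_sq assms by (simp_all add: r_def)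
  then have "0 < q" "q < 1" using assms by (simp_all add: q_def power2_eq_square)
  have "((\<lambda>e. real (hlow lam D e) / ln (1 / e)) \<longlongrightarrow> 1 / - ln q) (at_right 0)"
    unfolding hlow_def
  proof (rule Sup_geometric_level_set_tendsto[where m = "1 / (q * r)" and M = "r / q"])
    fix h :: nat
    assume "h \<ge> 2"
    then have "q ^ (h - 1) = q ^ h / q" using \<open>0 < q\<close> by (simp add: power_diff)
    then have "1 / (q * r) * q ^ h = q ^ (h - 1) / r" and "r / q * q ^ h = r * q ^ (h - 1)"
      by simp_all
    then show "1 / (q * r) * q ^ h \<le> \<bar>yseq lam D h - yseq lam D (h - 1)\<bar>"
      and "\<bar>yseq lam D h - yseq lam D (h - 1)\<bar> \<le> r / q * q ^ h"
      using yseq_diff_geometric_bounds[OF assms \<open>h \<ge> 2\<close>, folded r_def, folded q_def]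
      by simp_all
  qed (use \<open>0 < q\<close> \<open>q < 1\<close> \<open>r \<ge> 1\<close> in auto)
  moreover have "- ln q = ln (r ^ 2 / (lam * D))"
    using \<open>r \<ge> 1\<close> assms by (simp add: q_def ln_div)
  ultimately show ?thesis by (simp add: r_def)
qed

theorem lemma3:
  fixes lam :: real
  assumes "lam > 0"
  shows "(\<forall>D::real. D \<ge> 1 \<longrightarrow>
            yseq lam D \<longlonglongrightarrow> 2 / (1 + sqrt (1 + 4 * lam * D)))
       \<and> (\<exists>L :: real \<Rightarrow> real.
            (\<forall>D::real. D \<ge> 1 \<longrightarrow>
               ((\<lambda>eps. real (hlow lam D eps) / ln (1 / eps)) \<longlongrightarrow> L D) (at_right 0))
            \<and> ((\<lambda>D. L D / sqrt D) \<longlongrightarrow> sqrt lam) at_top)"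
proof -
  define L where "L D = 1 / ln (gfib_root (lam * D) ^ 2 / (lam * D))" for D
  have "filterlim (\<lambda>D. lam * D) at_top at_top"
    using assms by (intro filterlim_tendsto_pos_mult_at_top[OF tendsto_const] filterlim_ident)
  then have "((\<lambda>D. sqrt lam / (sqrt (lam * D) * ln (gfib_root (lam * D) ^ 2 / (lam * D))))
               \<longlongrightarrow> sqrt lam / 1) at_top"
    by (intro tendsto_divide tendsto_const filterlim_compose[OF sqrt_mult_ln_gfib_root_sq_div_tendsto])
      simp_all
  moreover have "eventually (\<lambda>D. sqrt lam / (sqrt (lam * D) * ln (gfib_root (lam * D) ^ 2 / (lam * D)))
                   = L D / sqrt D) at_top"
    using eventually_gt_at_top[of 0] by eventually_elim (use assms in \<open>simp add: L_def real_sqrt_mult\<close>)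
  ultimately have "((\<lambda>D. L D / sqrt D) \<longlongrightarrow> sqrt lam) at_top"
    by (simp add: tendsto_cong)
  moreover have "yseq lam D \<longlonglongrightarrow> 2 / (1 + sqrt (1 + 4 * lam * D))"
    and "((\<lambda>e. real (hlow lam D e) / ln (1 / e)) \<longlongrightarrow> L D) (at_right 0)" if "D \<ge> 1" for D
    using that assms yseq_tendsto hlow_tendsto by (simp_all add: L_def)
  ultimately show ?thesis by blast
qed

end
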